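(* Let $c \geq 5$ be an integer, let $G$ be a graph, and let $v$ be a vertex of $G$ that has odd degree or has a neighbor of degree at most $2$. Let $Y=\{v\}\cup N_1(v)\cup N_2(v)$. If $G$ has no odd $c$-coloring, but $(G,Y)$ has a semi-odd $c$-coloring, then $2d(v) \geq 2n_1(v) + n_2(v) + n_e(v) + c$.
   Context: $N_d(v)$ is the set of neighbors of $v$ of degree exactly $d$, $n_d(v)=|N_d(v)|$, and $d(v)$ is the degree of $v$. A vertex is easy if it has degree at least $3$ and either has odd degree or has a neighbor of degree at most $2$; $n_e(v)$ is the number of easy neighbors of $v$. An odd color of a vertex (under a partial coloring) is a color appearing an odd number of times among its colored neighbors. An odd $c$-coloring of a graph is a proper coloring with at most $c$ colors in which every non-isolated vertex has an odd color. For $Y\subseteq V(G)$, a semi-odd $c$-coloring of $(G,Y)$ is a proper $c$-coloring $\phi$ of $G-Y$ such that every vertex of $G-Y$ not in $N_G(Y)$ has a color appearing an odd number of times (under $\phi$) in its neighborhood. *)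

theory Defs
  imports Main
begin

definition graph :: "'a set \<Rightarrow> ('a \<Rightarrow> 'a \<Rightarrow> bool) \<Rightarrow> bool" where
  "graph V E \<longleftrightarrow> finite V \<and> (\<forall>x y. E x y \<longrightarrow> x \<in> V \<and> y \<in> V)
     \<and> (\<forall>x y. E x y \<longrightarrow> E y x) \<and> (\<forall>x. \<not> E x x)"

definition nbrs :: "'a set \<Rightarrow> ('a \<Rightarrow> 'a \<Rightarrow> bool) \<Rightarrow> 'a \<Rightarrow> 'a set" where
  "nbrs V E v = {u \<in> V. E v u}"

definition deg :: "'a set \<Rightarrow> ('a \<Rightarrow> 'a \<Rightarrow> bool) \<Rightarrow> 'a \<Rightarrow> nat" where
  "deg V E v = card (nbrs V E v)"

definition Nd :: "'a set \<Rightarrow> ('a \<Rightarrow> 'a \<Rightarrow> bool) \<Rightarrow> nat \<Rightarrow> 'a \<Rightarrow> 'a set" where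
  "Nd V E d v = {u \<in> nbrs V E v. deg V E u = d}"

definition nd :: "'a set \<Rightarrow> ('a \<Rightarrow> 'a \<Rightarrow> bool) \<Rightarrow> nat \<Rightarrow> 'a \<Rightarrow> nat" where
  "nd V E d v = card (Nd V E d v)"

definition easy :: "'a set \<Rightarrow> ('a \<Rightarrow> 'a \<Rightarrow> bool) \<Rightarrow> 'a \<Rightarrow> bool" where
  "easy V E u \<longleftrightarrow> deg V E u \<ge> 3 \<and>
     (odd (deg V E u) \<or> (\<exists>w \<in> nbrs V E u. deg V E w \<le> 2))"

definition ne :: "'a set \<Rightarrow> ('a \<Rightarrow> 'a \<Rightarrow> bool) \<Rightarrow> 'a \<Rightarrow> nat" where
  "ne V E v = card {u \<in> nbrs V E v. easy V E u}"

definition has_odd_color :: "'a set \<Rightarrow> ('a \<Rightarrow> 'a \<Rightarrow> bool) \<Rightarrow> ('a \<Rightarrow> nat) \<Rightarrow> 'a \<Rightarrow> bool" where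
  "has_odd_color V E \<phi> x \<longleftrightarrow> (\<exists>a. odd (card {u \<in> nbrs V E x. \<phi> u = a}))"

definition odd_coloring :: "'a set \<Rightarrow> ('a \<Rightarrow> 'a \<Rightarrow> bool) \<Rightarrow> nat \<Rightarrow> ('a \<Rightarrow> nat) \<Rightarrow> bool" where
  "odd_coloring V E c \<phi> \<longleftrightarrow> (\<forall>x \<in> V. \<phi> x < c)
     \<and> (\<forall>x y. E x y \<longrightarrow> \<phi> x \<noteq> \<phi> y)
     \<and> (\<forall>x \<in> V. nbrs V E x \<noteq> {} \<longrightarrow> has_odd_color V E \<phi> x)"

text \<open>Semi-odd c-colouring of (G,Y): proper c-colouring of G - Y such that
  every (non-isolated) vertex of G - Y outside N_G(Y) has an odd colour
  in its neighbourhood (which lies entirely in G - Y).\<close>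
definition semi_odd_coloring ::
  "'a set \<Rightarrow> ('a \<Rightarrow> 'a \<Rightarrow> bool) \<Rightarrow> 'a set \<Rightarrow> nat \<Rightarrow> ('a \<Rightarrow> nat) \<Rightarrow> bool" where
  "semi_odd_coloring V E Y c \<phi> \<longleftrightarrow> (\<forall>x \<in> V - Y. \<phi> x < c)
     \<and> (\<forall>x y. x \<in> V - Y \<longrightarrow> y \<in> V - Y \<longrightarrow> E x y \<longrightarrow> \<phi> x \<noteq> \<phi> y)
     \<and> (\<forall>x \<in> V - Y. (\<forall>y \<in> Y. \<not> E x y) \<longrightarrow> nbrs V E x \<noteq> {}
          \<longrightarrow> has_odd_color V E \<phi> x)"

end

theory Submission
  imports Defs
begin

text \<open>Suppose \<open>2 d(v) < 2 n\<^sub>1(v) + n\<^sub>2(v) + n\<^sub>e(v) + c\<close>. Extend a semi-odd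
  colouring of \<open>(G, Y)\<close> by giving \<open>v\<close> a colour \<open>\<alpha>\<close> that differs from the colours of
  its neighbours of degree at least 3 and of the second neighbours reached through its
  neighbours of degree 2, and that keeps an odd colour at each non-easy neighbour of
  degree at least 3 (such a neighbour forbids at most one colour). These are at most
  \<open>2 d(v) - 2 n\<^sub>1(v) - n\<^sub>2(v) - n\<^sub>e(v) < c\<close> constraints, so \<open>\<alpha>\<close> exists.
  The other vertices of \<open>Y\<close> have degree at most 2, less than \<open>c/2\<close>, and can be
  recoloured greedily into a proper colouring. Now every vertex without an odd colour has
  a neighbour \<open>z\<close> of degree less than \<open>c/2\<close>; recolouring \<open>z\<close> with a colour avoided by
  its neighbours and by the one colour forbidden by each neighbour repairs that vertex
  without creating new defects. Iterating gives an odd \<open>c\<close>-colouring, a contradiction.\<close>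

lemma odd_card_imp_odd_fiber:
  assumes "finite A" "odd (card A)"
  shows "\<exists>a. odd (card {y\<in>A. f y = a})"
proof (rule ccontr)
  assume "\<not> ?thesis"
  then have even_fibers: "\<forall>a. even (card {y\<in>A. f y = a})" by auto
  have "card A = card (\<Union>a\<in>f ` A. {y\<in>A. f y = a})" by (rule arg_cong[of _ _ card]) auto
  also have "\<dots> = (\<Sum>a\<in>f ` A. card {y\<in>A. f y = a})"
    by (rule card_UN_disjoint) (use assms(1) in auto)
  also have "even \<dots>" by (rule dvd_sum) (use even_fibers in auto)
  finally show False using assms(2) by simp
qed

text \<open>If \<open>A - {v}\<close> has an odd fibre of colour \<open>a\<close>, only \<open>\<alpha> = a\<close> can destroy it;
  otherwise all its fibres are even and the fibre of \<open>\<alpha>\<close> gains \<open>v\<close>.\<close>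
lemma odd_fiber_fun_upd_but_one:
  assumes "finite A" "v \<in> A"
  shows "\<exists>g. \<forall>\<alpha>. \<alpha> \<noteq> g \<longrightarrow> (\<exists>a. odd (card {y\<in>A. (f(v:=\<alpha>)) y = a}))"
proof (cases "\<exists>a. odd (card {y\<in>A-{v}. f y = a})")
  case True
  then obtain a where a: "odd (card {y\<in>A-{v}. f y = a})" by blast
  have "{y\<in>A. (f(v:=\<alpha>)) y = a} = {y\<in>A-{v}. f y = a}" if "\<alpha> \<noteq> a" for \<alpha>
    using that by auto
  then show ?thesis using a by metis
next
  case False
  have "card {y\<in>A. (f(v:=\<alpha>)) y = \<alpha>} = Suc (card {y\<in>A-{v}. f y = \<alpha>})" for \<alpha>
  proof -
    have "{y\<in>A. (f(v:=\<alpha>)) y = \<alpha>} = insert v {y\<in>A-{v}. f y = \<alpha>}" using assms(2) by auto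
    then show ?thesis using assms(1) by simp
  qed
  then show ?thesis using False by (metis even_Suc)
qed

lemma has_odd_color_cong:
  assumes "\<forall>y\<in>nbrs V E x. \<psi> y = \<psi>' y"
  shows "has_odd_color V E \<psi> x \<longleftrightarrow> has_odd_color V E \<psi>' x"
proof -
  have "{u \<in> nbrs V E x. \<psi> u = a} = {u \<in> nbrs V E x. \<psi>' u = a}" for a using assms by auto
  then show ?thesis unfolding has_odd_color_def by simp
qed

lemma ex_less_notin_of_card_less:
  fixes c :: nat
  assumes "finite F" "card F < c"
  shows "\<exists>b<c. b \<notin> F"
proof -
  have "\<not> {0..<c} \<subseteq> F"
  proof
    assume "{0..<c} \<subseteq> F"
    from card_mono[OF assms(1) this] assms(2) show False by simp
  qed
  then show ?thesis by auto
qed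

definition proper_coloring_except ::
  "'a set \<Rightarrow> ('a \<Rightarrow> 'a \<Rightarrow> bool) \<Rightarrow> nat \<Rightarrow> 'a set \<Rightarrow> ('a \<Rightarrow> nat) \<Rightarrow> bool" where
  "proper_coloring_except V E c P \<psi> \<longleftrightarrow> (\<forall>x\<in>V. \<psi> x < c)
     \<and> (\<forall>x y. E x y \<longrightarrow> x \<notin> P \<longrightarrow> y \<notin> P \<longrightarrow> \<psi> x \<noteq> \<psi> y)"

definition odd_defects :: "'a set \<Rightarrow> ('a \<Rightarrow> 'a \<Rightarrow> bool) \<Rightarrow> ('a \<Rightarrow> nat) \<Rightarrow> 'a set" where
  "odd_defects V E \<psi> = {x\<in>V. nbrs V E x \<noteq> {} \<and> \<not> has_odd_color V E \<psi> x}"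

lemma odd_coloring_iff:
  "odd_coloring V E c \<psi> \<longleftrightarrow> proper_coloring_except V E c {} \<psi> \<and> odd_defects V E \<psi> = {}"
  unfolding odd_coloring_def proper_coloring_except_def odd_defects_def by blast

locale fin_graph =
  fixes V :: "'a set" and E :: "'a \<Rightarrow> 'a \<Rightarrow> bool"
  assumes graph: "graph V E"
begin

abbreviation N :: "'a \<Rightarrow> 'a set" where "N \<equiv> nbrs V E"
abbreviation d :: "'a \<Rightarrow> nat" where "d \<equiv> deg V E"

lemma finite_V: "finite V"
  using graph unfolding graph_def by simp

lemma finite_nbrs: "finite (N x)"
  using finite_V unfolding nbrs_def by simp

lemma nbrs_sym: "x \<in> N y \<longleftrightarrow> y \<in> N x"
  using graph unfolding graph_def nbrs_def by blast

lemma deg_pos_if_nbr: "u \<in> N v \<Longrightarrow> 0 < d u"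
  using finite_nbrs nbrs_sym unfolding deg_def by (metis card_gt_0_iff empty_iff)

lemma odd_deg_imp_has_odd_color: "odd (d x) \<Longrightarrow> has_odd_color V E \<psi> x"
  using odd_card_imp_odd_fiber[OF finite_nbrs] unfolding has_odd_color_def deg_def by blast

lemma has_odd_color_fun_upd_but_one:
  "u \<in> N x \<Longrightarrow> \<exists>g. \<forall>\<alpha>. \<alpha> \<noteq> g \<longrightarrow> has_odd_color V E (\<psi>(u:=\<alpha>)) x"
  unfolding has_odd_color_def by (rule odd_fiber_fun_upd_but_one[OF finite_nbrs])

lemma ex_recolor_low_degree:
  assumes "2 * d u < c"
  obtains b where "b < c" "\<forall>w\<in>N u. \<psi> w \<noteq> b" "\<forall>w\<in>N u. has_odd_color V E (\<psi>(u:=b)) w"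
proof -
  have "\<forall>w\<in>N u. \<exists>g. \<forall>\<alpha>. \<alpha> \<noteq> g \<longrightarrow> has_odd_color V E (\<psi>(u:=\<alpha>)) w"
    using has_odd_color_fun_upd_but_one nbrs_sym by blast
  then obtain h where h: "\<forall>w\<in>N u. \<forall>\<alpha>. \<alpha> \<noteq> h w \<longrightarrow> has_odd_color V E (\<psi>(u:=\<alpha>)) w"
    by (rule bchoice[THEN exE])
  have "card (\<psi> ` N u \<union> h ` N u) \<le> card (\<psi> ` N u) + card (h ` N u)" by (rule card_Un_le)
  also have "\<dots> \<le> 2 * d u"
    using card_image_le[OF finite_nbrs] unfolding deg_def by (metis add_mono mult_2)
  finally have "card (\<psi> ` N u \<union> h ` N u) < c" using assms by linarith
  moreover have "finite (\<psi> ` N u \<union> h ` N u)" using finite_nbrs by simp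
  ultimately obtain b where "b < c" "b \<notin> \<psi> ` N u \<union> h ` N u"
    using ex_less_notin_of_card_less by blast
  then show thesis using that h by blast
qed

lemma proper_coloring_except_fun_upd:
  assumes "proper_coloring_except V E c P \<psi>" "b < c" "\<forall>w\<in>N p. \<psi> w \<noteq> b"
  shows "proper_coloring_except V E c (P - {p}) (\<psi>(p:=b))"
proof -
  have "b \<noteq> \<psi> y" if "E p y \<or> E y p" for y
    using that assms(3) graph unfolding graph_def nbrs_def by blast
  moreover have "\<not> E p p" using graph unfolding graph_def by blast
  ultimately show ?thesis
    using assms(1,2) graph unfolding proper_coloring_except_def graph_def by auto
qed

lemma proper_coloring_by_recoloring:
  assumes "finite P" "\<forall>p\<in>P. 2 * d p < c" "proper_coloring_except V E c P \<psi>"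
  shows "\<exists>\<psi>'. proper_coloring_except V E c {} \<psi>' \<and> (\<forall>x. x \<notin> P \<longrightarrow> \<psi>' x = \<psi> x)"
  using assms
proof (induction P arbitrary: \<psi> rule: finite_induct)
  case empty
  then show ?case by blast
next
  case (insert p P \<psi>)
  have "2 * d p < c" using insert.prems(1) by simp
  then obtain b where b: "b < c" "\<forall>w\<in>N p. \<psi> w \<noteq> b" "\<forall>w\<in>N p. has_odd_color V E (\<psi>(p:=b)) w"
    by (rule ex_recolor_low_degree)
  have "proper_coloring_except V E c P (\<psi>(p:=b))"
    using proper_coloring_except_fun_upd[OF insert.prems(2) b(1,2)] insert.hyps(2) by simp
  then obtain \<psi>' where "proper_coloring_except V E c {} \<psi>'" "\<forall>x. x \<notin> P \<longrightarrow> \<psi>' x = (\<psi>(p:=b)) x"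
    using insert.IH insert.prems(1) by blast
  then show ?case by auto
qed

lemma odd_defects_recolor_subset:
  assumes "z \<in> N x" "\<forall>w\<in>N z. has_odd_color V E (\<psi>(z:=b)) w"
  shows "odd_defects V E (\<psi>(z:=b)) \<subseteq> odd_defects V E \<psi> - {x}"
proof
  fix y assume y: "y \<in> odd_defects V E (\<psi>(z:=b))"
  then have "y \<notin> N z" using assms(2) unfolding odd_defects_def by blast
  then have "has_odd_color V E (\<psi>(z:=b)) y \<longleftrightarrow> has_odd_color V E \<psi> y"
    using nbrs_sym by (intro has_odd_color_cong) auto
  moreover have "x \<in> N z" using assms(1) nbrs_sym by blast
  ultimately show "y \<in> odd_defects V E \<psi> - {x}"
    using y \<open>y \<notin> N z\<close> unfolding odd_defects_def by auto
qed

lemma odd_coloring_if_defects_near_low_degree: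
  assumes "proper_coloring_except V E c {} \<psi>" "\<forall>x\<in>odd_defects V E \<psi>. \<exists>z\<in>N x. 2 * d z < c"
  shows "\<exists>\<psi>'. odd_coloring V E c \<psi>'"
  using assms
proof (induction "card (odd_defects V E \<psi>)" arbitrary: \<psi> rule: less_induct)
  case less
  show ?case
  proof (cases "odd_defects V E \<psi> = {}")
    case True
    then show ?thesis using less.prems(1) odd_coloring_iff by blast
  next
    case False
    then obtain x z where x: "x \<in> odd_defects V E \<psi>" and z: "z \<in> N x" "2 * d z < c"
      using less.prems(2) by blast
    obtain b where b: "b < c" "\<forall>w\<in>N z. \<psi> w \<noteq> b" "\<forall>w\<in>N z. has_odd_color V E (\<psi>(z:=b)) w"
      by (rule ex_recolor_low_degree[OF z(2)])
    have proper: "proper_coloring_except V E c {} (\<psi>(z:=b))"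
      using proper_coloring_except_fun_upd[OF less.prems(1) b(1,2)] by simp
    have sub: "odd_defects V E (\<psi>(z:=b)) \<subseteq> odd_defects V E \<psi> - {x}"
      using odd_defects_recolor_subset[OF z(1) b(3)] .
    have "finite (odd_defects V E \<psi>)" using finite_V unfolding odd_defects_def by simp
    moreover have "odd_defects V E (\<psi>(z:=b)) \<subset> odd_defects V E \<psi>" using sub x by blast
    ultimately have fewer: "card (odd_defects V E (\<psi>(z:=b))) < card (odd_defects V E \<psi>)"
      by (simp add: psubset_card_mono)
    have "\<forall>y\<in>odd_defects V E (\<psi>(z:=b)). \<exists>z'\<in>N y. 2 * d z' < c" using sub less.prems(2) by blast
    then show ?thesis by (rule less.hyps[OF fewer proper])
  qed
qed

lemma deg_eq_nd_1_nd_2_high: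
  "d v = nd V E 1 v + nd V E 2 v + card {u\<in>N v. 3 \<le> d u}"
proof -
  have "N v = Nd V E 1 v \<union> Nd V E 2 v \<union> {u\<in>N v. 3 \<le> d u}"
    using deg_pos_if_nbr unfolding Nd_def by force
  then have "d v = card (Nd V E 1 v \<union> Nd V E 2 v \<union> {u\<in>N v. 3 \<le> d u})"
    unfolding deg_def by simp
  also have "\<dots> = nd V E 1 v + nd V E 2 v + card {u\<in>N v. 3 \<le> d u}"
    unfolding nd_def Nd_def using finite_nbrs
    by (subst card_Un_disjoint, auto, subst card_Un_disjoint, auto)
  finally show ?thesis .
qed

lemma card_far_nbrs_le: "card (\<Union>u\<in>Nd V E 2 v. N u - {v}) \<le> nd V E 2 v"
proof -
  have "card (\<Union>u\<in>Nd V E 2 v. N u - {v}) \<le> (\<Sum>u\<in>Nd V E 2 v. card (N u - {v}))"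
    by (rule card_UN_le) (use finite_nbrs in \<open>simp add: Nd_def\<close>)
  also have "\<dots> = (\<Sum>u\<in>Nd V E 2 v. 1)"
  proof (rule sum.cong[OF refl])
    fix u assume "u \<in> Nd V E 2 v"
    then have "v \<in> N u" "card (N u) = 2" using nbrs_sym unfolding Nd_def deg_def by auto
    then show "card (N u - {v}) = 1" using finite_nbrs by simp
  qed
  finally show ?thesis unfolding nd_def by simp
qed

lemma card_center_constraints_less:
  assumes "2 * d v < 2 * nd V E 1 v + nd V E 2 v + ne V E v + c"
  shows "card {u\<in>N v. 3 \<le> d u} + card (\<Union>u\<in>Nd V E 2 v. N u - {v})
    + card {u\<in>N v. 3 \<le> d u \<and> \<not> easy V E u} < c"
proof -
  define High where "High = {u\<in>N v. 3 \<le> d u}"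
  define Easy where "Easy = {u\<in>N v. easy V E u}"
  have fin: "finite High" unfolding High_def by (simp add: finite_nbrs)
  have sub: "Easy \<subseteq> High" unfolding Easy_def High_def by (auto simp: easy_def)
  have "card (High - Easy) = card High - card Easy"
    using card_Diff_subset[OF finite_subset[OF sub fin] sub] .
  moreover have "card Easy \<le> card High" using card_mono[OF fin sub] .
  moreover have "ne V E v = card Easy" unfolding ne_def Easy_def ..
  moreover have "High - Easy = {u\<in>N v. 3 \<le> d u \<and> \<not> easy V E u}"
    unfolding High_def Easy_def by blast
  ultimately have "card {u\<in>N v. 3 \<le> d u \<and> \<not> easy V E u} = card High - ne V E v"
    "ne V E v \<le> card High" by simp_all
  then show ?thesis
    using assms deg_eq_nd_1_nd_2_high[of v] card_far_nbrs_le[of v] unfolding High_def by linarith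
qed

lemma ex_color_for_center:
  assumes "2 * d v < 2 * nd V E 1 v + nd V E 2 v + ne V E v + c"
  shows "\<exists>\<alpha><c. (\<forall>u\<in>N v. 3 \<le> d u \<longrightarrow> \<phi> u \<noteq> \<alpha>)
    \<and> (\<forall>u\<in>Nd V E 2 v. \<forall>w\<in>N u - {v}. \<phi> w \<noteq> \<alpha>)
    \<and> (\<forall>u\<in>N v. 3 \<le> d u \<and> \<not> easy V E u \<longrightarrow> has_odd_color V E (\<phi>(v:=\<alpha>)) u)"
proof -
  define High where "High = {u\<in>N v. 3 \<le> d u}"
  define Far where "Far = (\<Union>u\<in>Nd V E 2 v. N u - {v})"
  define Hard where "Hard = {u\<in>N v. 3 \<le> d u \<and> \<not> easy V E u}"
  have "\<forall>u\<in>Hard. \<exists>g. \<forall>\<alpha>. \<alpha> \<noteq> g \<longrightarrow> has_odd_color V E (\<phi>(v:=\<alpha>)) u"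
  proof
    fix u assume "u \<in> Hard"
    then have "v \<in> N u" using nbrs_sym unfolding Hard_def by blast
    then show "\<exists>g. \<forall>\<alpha>. \<alpha> \<noteq> g \<longrightarrow> has_odd_color V E (\<phi>(v:=\<alpha>)) u"
      by (rule has_odd_color_fun_upd_but_one)
  qed
  then obtain g where g: "\<forall>u\<in>Hard. \<forall>\<alpha>. \<alpha> \<noteq> g u \<longrightarrow> has_odd_color V E (\<phi>(v:=\<alpha>)) u"
    by (rule bchoice[THEN exE])
  define Forbidden where "Forbidden = \<phi> ` High \<union> \<phi> ` Far \<union> g ` Hard"
  have fin: "finite High" "finite Far" "finite Hard"
    unfolding High_def Far_def Hard_def Nd_def by (simp_all add: finite_nbrs)
  have "card Forbidden \<le> card (\<phi> ` High) + card (\<phi> ` Far) + card (g ` Hard)"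
    using card_Un_le[of "\<phi> ` High \<union> \<phi> ` Far" "g ` Hard"] card_Un_le[of "\<phi> ` High" "\<phi> ` Far"]
    unfolding Forbidden_def by linarith
  also have "\<dots> \<le> card High + card Far + card Hard"
    by (intro add_mono card_image_le) (use fin in auto)
  also have "\<dots> < c"
    using card_center_constraints_less[OF assms] unfolding High_def Far_def Hard_def .
  finally have "card Forbidden < c" .
  moreover have "finite Forbidden" using fin unfolding Forbidden_def by simp
  ultimately obtain \<alpha> where "\<alpha> < c" and \<alpha>: "\<alpha> \<notin> Forbidden"
    using ex_less_notin_of_card_less by blast
  have "\<forall>u\<in>N v. 3 \<le> d u \<longrightarrow> \<phi> u \<noteq> \<alpha>" using \<alpha> unfolding Forbidden_def High_def by blast
  moreover have "\<forall>u\<in>Nd V E 2 v. \<forall>w\<in>N u - {v}. \<phi> w \<noteq> \<alpha>"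
    using \<alpha> unfolding Forbidden_def Far_def by blast
  moreover have "\<forall>u\<in>Hard. has_odd_color V E (\<phi>(v:=\<alpha>)) u"
    using g \<alpha> unfolding Forbidden_def by blast
  ultimately show ?thesis using \<open>\<alpha> < c\<close> unfolding Hard_def by blast
qed

end

locale semi_odd_extension = fin_graph +
  fixes c :: nat and v :: 'a and \<phi> :: "'a \<Rightarrow> nat" and \<alpha> :: nat
  assumes c_ge_5: "5 \<le> c"
    and v_odd_or_low: "odd (d v) \<or> (\<exists>u\<in>N v. d u \<le> 2)"
    and semi_odd: "semi_odd_coloring V E ({v} \<union> Nd V E 1 v \<union> Nd V E 2 v) c \<phi>"
    and \<alpha>_less: "\<alpha> < c"
    and \<alpha>_high: "\<forall>u\<in>N v. 3 \<le> d u \<longrightarrow> \<phi> u \<noteq> \<alpha>"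
    and \<alpha>_far: "\<forall>u\<in>Nd V E 2 v. \<forall>w\<in>N u - {v}. \<phi> w \<noteq> \<alpha>"
    and \<alpha>_keeps: "\<forall>u\<in>N v. 3 \<le> d u \<and> \<not> easy V E u \<longrightarrow> has_odd_color V E (\<phi>(v:=\<alpha>)) u"
begin

definition P :: "'a set" where "P = Nd V E 1 v \<union> Nd V E 2 v"

text \<open>The colour \<open>0\<close> on \<open>P\<close> is a placeholder: those vertices are recoloured greedily.\<close>
definition \<psi>\<^sub>0 :: "'a \<Rightarrow> nat" where "\<psi>\<^sub>0 = (\<lambda>x. if x \<in> P then 0 else \<phi> x)(v := \<alpha>)"

lemma low_deg_P: "p \<in> P \<Longrightarrow> 2 * d p < c"
  using c_ge_5 unfolding P_def Nd_def by auto

lemma finite_P: "finite P"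
  using finite_nbrs unfolding P_def Nd_def by simp

lemma high_if_nbr_notin_P: "u \<in> N v \<Longrightarrow> u \<notin> P \<Longrightarrow> 3 \<le> d u"
  using deg_pos_if_nbr[of u v] unfolding P_def Nd_def by force

lemma \<psi>\<^sub>0_center: "\<psi>\<^sub>0 v = \<alpha>"
  unfolding \<psi>\<^sub>0_def by simp

lemma \<psi>\<^sub>0_eq: "z \<noteq> v \<Longrightarrow> z \<notin> P \<Longrightarrow> \<psi>\<^sub>0 z = \<phi> z"
  unfolding \<psi>\<^sub>0_def by simp

lemma \<psi>\<^sub>0_neq_at_center: "E v y \<Longrightarrow> y \<notin> P \<Longrightarrow> \<psi>\<^sub>0 v \<noteq> \<psi>\<^sub>0 y"
proof -
  assume "E v y" "y \<notin> P"
  then have "y \<in> N v" "y \<noteq> v" using graph unfolding graph_def nbrs_def by auto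
  then have "\<phi> y \<noteq> \<alpha>" using \<alpha>_high high_if_nbr_notin_P \<open>y \<notin> P\<close> by blast
  then show ?thesis using \<psi>\<^sub>0_center \<psi>\<^sub>0_eq \<open>y \<noteq> v\<close> \<open>y \<notin> P\<close> by simp
qed

lemma proper_coloring_except_\<psi>\<^sub>0: "proper_coloring_except V E c P \<psi>\<^sub>0"
  unfolding proper_coloring_except_def
proof (intro conjI allI impI ballI)
  fix x assume "x \<in> V"
  then show "\<psi>\<^sub>0 x < c" using semi_odd \<alpha>_less c_ge_5 unfolding semi_odd_coloring_def \<psi>\<^sub>0_def P_def by auto
next
  fix x y assume xy: "E x y" "x \<notin> P" "y \<notin> P"
  then have "E y x" "x \<in> V" "y \<in> V" using graph unfolding graph_def by blast+
  consider "x = v" | "y = v" | "x \<noteq> v" "y \<noteq> v" by blast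
  then show "\<psi>\<^sub>0 x \<noteq> \<psi>\<^sub>0 y"
  proof cases
    case 1
    then show ?thesis using \<psi>\<^sub>0_neq_at_center xy by blast
  next
    case 2
    then show ?thesis using \<psi>\<^sub>0_neq_at_center \<open>E y x\<close> xy(2) by metis
  next
    case 3
    then have "\<phi> x \<noteq> \<phi> y"
      using semi_odd xy \<open>x \<in> V\<close> \<open>y \<in> V\<close> unfolding semi_odd_coloring_def P_def by blast
    then show ?thesis using \<psi>\<^sub>0_eq 3 xy(2,3) by simp
  qed
qed

lemma has_odd_color_\<psi>\<^sub>0_deg_2:
  assumes "x \<in> Nd V E 2 v" "\<forall>z\<in>N x. z \<notin> P"
  shows "has_odd_color V E \<psi>\<^sub>0 x"
proof -
  have "v \<in> N x" "card (N x) = 2" using assms(1) nbrs_sym unfolding Nd_def deg_def by auto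
  then obtain w where Nx: "N x = {v, w}" and "w \<noteq> v"
    using finite_nbrs by (metis card_2_iff doubleton_eq_iff insertE singletonD)
  then have "\<phi> w \<noteq> \<alpha>" using \<alpha>_far assms(1) by auto
  moreover have "\<psi>\<^sub>0 w = \<phi> w" using \<psi>\<^sub>0_eq assms(2) Nx \<open>w \<noteq> v\<close> by simp
  ultimately have "{y\<in>N x. \<psi>\<^sub>0 y = \<alpha>} = {v}" using Nx \<psi>\<^sub>0_center by auto
  then have "odd (card {y\<in>N x. \<psi>\<^sub>0 y = \<alpha>})" by simp
  then show ?thesis unfolding has_odd_color_def by blast
qed

lemma has_odd_color_\<psi>\<^sub>0:
  assumes "x \<in> V" "N x \<noteq> {}" "\<forall>z\<in>N x. 3 \<le> d z"
  shows "has_odd_color V E \<psi>\<^sub>0 x"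
proof (cases "odd (d x)")
  case True
  then show ?thesis by (rule odd_deg_imp_has_odd_color)
next
  case False
  have no_P: "\<forall>z\<in>N x. z \<notin> P" using assms(3) unfolding P_def Nd_def by auto
  consider "x = v" | "x \<in> P" | "x \<noteq> v" "x \<notin> P" "v \<in> N x" | "x \<noteq> v" "x \<notin> P" "v \<notin> N x"
    by blast
  then show ?thesis
  proof cases
    case 1
    then show ?thesis using v_odd_or_low False assms(3) by force
  next
    case 2
    then have "x \<in> Nd V E 2 v" using False unfolding P_def Nd_def by auto
    then show ?thesis using has_odd_color_\<psi>\<^sub>0_deg_2 no_P by blast
  next
    case 3
    then have "x \<in> N v" using nbrs_sym by blast
    then have "3 \<le> d x" using high_if_nbr_notin_P 3 by blast
    moreover have "\<not> easy V E x" using False assms(3) unfolding easy_def by fastforce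
    ultimately have "has_odd_color V E (\<phi>(v:=\<alpha>)) x" using \<alpha>_keeps \<open>x \<in> N v\<close> by blast
    moreover have "has_odd_color V E \<psi>\<^sub>0 x \<longleftrightarrow> has_odd_color V E (\<phi>(v:=\<alpha>)) x"
      using no_P by (intro has_odd_color_cong) (auto simp: \<psi>\<^sub>0_def)
    ultimately show ?thesis by simp
  next
    case 4
    then have "\<forall>y\<in>{v} \<union> P. \<not> E x y" using no_P graph unfolding graph_def nbrs_def by blast
    then have "has_odd_color V E \<phi> x"
      using semi_odd assms(1,2) 4 unfolding semi_odd_coloring_def P_def by auto
    moreover have "has_odd_color V E \<psi>\<^sub>0 x \<longleftrightarrow> has_odd_color V E \<phi> x"
      using no_P 4 by (intro has_odd_color_cong) (auto simp: \<psi>\<^sub>0_def)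
    ultimately show ?thesis by simp
  qed
qed

theorem ex_odd_coloring: "\<exists>\<psi>. odd_coloring V E c \<psi>"
proof -
  obtain \<psi> where \<psi>: "proper_coloring_except V E c {} \<psi>" "\<forall>x. x \<notin> P \<longrightarrow> \<psi> x = \<psi>\<^sub>0 x"
    using proper_coloring_by_recoloring[OF finite_P _ proper_coloring_except_\<psi>\<^sub>0] low_deg_P
    by blast
  have "\<exists>z\<in>N x. 2 * d z < c" if x: "x \<in> odd_defects V E \<psi>" for x
  proof (rule ccontr)
    assume "\<not> ?thesis"
    then have high: "\<forall>z\<in>N x. 3 \<le> d z" and "\<forall>z\<in>N x. z \<notin> P"
      using c_ge_5 low_deg_P by force+
    then have "has_odd_color V E \<psi> x \<longleftrightarrow> has_odd_color V E \<psi>\<^sub>0 x"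
      using \<psi>(2) by (intro has_odd_color_cong) auto
    then show False using has_odd_color_\<psi>\<^sub>0[OF _ _ high] x unfolding odd_defects_def by auto
  qed
  then show ?thesis using odd_coloring_if_defects_near_low_degree \<psi>(1) by blast
qed

end

theorem mainTheorem8:
  fixes V :: "'a set" and E :: "'a \<Rightarrow> 'a \<Rightarrow> bool" and c :: nat and v :: 'a
  assumes "graph V E"
    and "c \<ge> 5"
    and "v \<in> V"
    and "odd (deg V E v) \<or> (\<exists>u \<in> nbrs V E v. deg V E u \<le> 2)"
    and "\<not> (\<exists>\<phi>. odd_coloring V E c \<phi>)"
    and "\<exists>\<phi>. semi_odd_coloring V E ({v} \<union> Nd V E 1 v \<union> Nd V E 2 v) c \<phi>"
  shows "2 * deg V E v \<ge> 2 * nd V E 1 v + nd V E 2 v + ne V E v + c"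
proof (rule ccontr)
  assume too_small: "\<not> ?thesis"
  interpret fin_graph V E by (rule fin_graph.intro) (rule assms(1))
  obtain \<phi> where \<phi>: "semi_odd_coloring V E ({v} \<union> Nd V E 1 v \<union> Nd V E 2 v) c \<phi>"
    using assms(6) by blast
  have "2 * d v < 2 * nd V E 1 v + nd V E 2 v + ne V E v + c" using too_small by simp
  from ex_color_for_center[OF this] obtain \<alpha> where \<alpha>: "\<alpha> < c"
    "\<forall>u\<in>N v. 3 \<le> d u \<longrightarrow> \<phi> u \<noteq> \<alpha>" "\<forall>u\<in>Nd V E 2 v. \<forall>w\<in>N u - {v}. \<phi> w \<noteq> \<alpha>"
    "\<forall>u\<in>N v. 3 \<le> d u \<and> \<not> easy V E u \<longrightarrow> has_odd_color V E (\<phi>(v:=\<alpha>)) u"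
    by blast
  interpret semi_odd_extension V E c v \<phi> \<alpha>
    using assms(1,2,4) \<phi> \<alpha>
    by (intro semi_odd_extension.intro semi_odd_extension_axioms.intro fin_graph.intro) simp_all
  show False using ex_odd_coloring assms(5) by blast
qed

end
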